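(* Let $\mathbb{Y}$ and $\mathbb{T}$ be sets and let $\underline{\mathsf{P}}_{Y,\Theta}$ be a coherent lower prevision on the linear space $\mathfrak{F}$ of bounded real-valued functions (gambles) on $\mathbb{Y}\times\mathbb{T}$. Suppose $\underline{\mathsf{P}}_{Y,\Theta}$ is $\mathscr{B}$-conglomerable, where $\mathscr{B}=\{B_y=\{y\}\times\mathbb{T}: y\in\mathbb{Y}\}$. Let $\{\underline{\Gamma}_y: y\in\mathbb{Y}\}$ be the generalized Bayes IM (defined in the context). Let $y\mapsto(\underline{\Pi}_y,\overline{\Pi}_y)$ be an inferential model such that $\underline{\Pi}_y\le\underline{\Gamma}_y$ for every $y\in\mathbb{Y}$. Then this IM is invulnerable, i.e., for every $H\subseteq\mathbb{T}$ and every $\beta\in[0,1]$, the gamble $$f^{H,\beta}(y,\theta)=\{1(\theta\in H)-\beta\}\,1\{\underline{\Pi}_y(H)>\beta\},\qquad (y,\theta)\in\mathbb{Y}\times\mathbb{T},$$ satisfies $\underline{\mathsf{P}}_{Y,\Theta}(f^{H,\beta})\ge 0$.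
   Context: A lower prevision $\underline{\mathsf{P}}$ on a linear space $\mathfrak{F}$ of bounded gambles on a set $\Omega$ is coherent if for all integers $m,K\ge0$ and all $f_0,\dots,f_K\in\mathfrak{F}$, $\sup_{\omega}\bigl[\sum_{k=1}^K\{f_k(\omega)-\underline{\mathsf{P}}(f_k)\}-m\{f_0(\omega)-\underline{\mathsf{P}}(f_0)\}\bigr]\ge0$; its conjugate upper prevision is $\overline{\mathsf{P}}(f)=-\underline{\mathsf{P}}(-f)$, and for a set $B$ one writes $\underline{\mathsf{P}}(B)=\underline{\mathsf{P}}(1_B)$. $\underline{\mathsf{P}}_{Y,\Theta}$ is $\mathscr{B}$-conglomerable if for every gamble $f$ and every countable collection $\{B_{y_k}\}$ of distinct sets from $\mathscr{B}$, if $\underline{\mathsf{P}}_{Y,\Theta}(1_{B_{y_k}}f)>0$ for all $k$, then $\underline{\mathsf{P}}_{Y,\Theta}(1_{\bigcup_kB_{y_k}}f)\ge0$. An inferential model (IM) is a map $y\mapsto(\underline{\Pi}_y,\overline{\Pi}_y)$ assigning to each $y\in\mathbb{Y}$ a coherent lower prevision $\underline{\Pi}_y$ (with conjugate upper prevision $\overline{\Pi}_y$) on the bounded gambles $f_y(\theta)=f(y,\theta)$ on $\mathbb{T}$; for $H\subseteq\mathbb{T}$, $\underline{\Pi}_y(H)=\underline{\Pi}_y(1_H)$. The generalized Bayes IM is defined, for each $y$ and $f\in\mathfrak{F}$, by: if $\underline{\mathsf{P}}_{Y,\Theta}(\{y\}\times\mathbb{T})=0$, then $\underline{\Gamma}_y(f_y)=\inf_{\theta\in\mathbb{T}}f(y,\theta)$;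 if $\underline{\mathsf{P}}_{Y,\Theta}(\{y\}\times\mathbb{T})>0$, then $\underline{\Gamma}_y(f_y)=\min\{\mathsf{P}(f\,1_{\{y\}\times\mathbb{T}})/\mathsf{P}(1_{\{y\}\times\mathbb{T}}):\mathsf{P}\in\mathscr{C}(\underline{\mathsf{P}}_{Y,\Theta})\}$, where $\mathscr{C}(\underline{\mathsf{P}}_{Y,\Theta})$ is the set of all linear previsions (finitely additive expectations) $\mathsf{P}$ on $\mathfrak{F}$ with $\mathsf{P}\ge\underline{\mathsf{P}}_{Y,\Theta}$ pointwise. *)

theory Defs
  imports "HOL-Analysis.Analysis"
begin

definition gamble :: "('a \<Rightarrow> real) \<Rightarrow> bool" where
  "gamble f \<longleftrightarrow> (\<exists>B. \<forall>x. \<bar>f x\<bar> \<le> B)"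

definition coherent_lp :: "(('a \<Rightarrow> real) \<Rightarrow> real) \<Rightarrow> bool" where
  "coherent_lp LP \<longleftrightarrow>
     (\<forall>(m::nat) (K::nat) (fs::nat \<Rightarrow> 'a \<Rightarrow> real).
        (\<forall>k\<le>K. gamble (fs k)) \<longrightarrow>
        0 \<le> (SUP \<omega>. (\<Sum>k=1..K. fs k \<omega> - LP (fs k)) - real m * (fs 0 \<omega> - LP (fs 0))))"

definition linear_prevision :: "(('a \<Rightarrow> real) \<Rightarrow> real) \<Rightarrow> bool" where
  "linear_prevision P \<longleftrightarrow>
     (\<forall>f g. gamble f \<longrightarrow> gamble g \<longrightarrow> P (\<lambda>x. f x + g x) = P f + P g) \<and>
     (\<forall>c f. gamble f \<longrightarrow> P (\<lambda>x. c * f x) = c * P f) \<and>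
     (\<forall>f. gamble f \<longrightarrow> (INF x. f x) \<le> P f)"

definition credal :: "(('a \<Rightarrow> real) \<Rightarrow> real) \<Rightarrow> (('a \<Rightarrow> real) \<Rightarrow> real) set" where
  "credal LP = {P. linear_prevision P \<and> (\<forall>f. gamble f \<longrightarrow> LP f \<le> P f)}"

definition Bcell :: "'y \<Rightarrow> ('y \<times> 't) set" where
  "Bcell y = {y} \<times> UNIV"

definition B_conglomerable :: "((('y \<times> 't) \<Rightarrow> real) \<Rightarrow> real) \<Rightarrow> bool" where
  "B_conglomerable LP \<longleftrightarrow>
     (\<forall>f (Y0::'y set). gamble f \<longrightarrow> countable Y0 \<longrightarrow>
        (\<forall>y\<in>Y0. 0 < LP (\<lambda>p. indicator (Bcell y) p * f p)) \<longrightarrow>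
        0 \<le> LP (\<lambda>p. indicator (\<Union>y\<in>Y0. Bcell y) p * f p))"

text \<open>The generalized Bayes IM, evaluated at y on the gamble g = f_y on T.
  The minimum over the credal set is written as an infimum.\<close>
definition gen_bayes :: "((('y \<times> 't) \<Rightarrow> real) \<Rightarrow> real) \<Rightarrow> 'y \<Rightarrow> ('t \<Rightarrow> real) \<Rightarrow> real" where
  "gen_bayes LP y g =
     (if LP (indicator (Bcell y)) = 0 then (INF \<theta>. g \<theta>)
      else (INF P\<in>credal LP.
              P (\<lambda>p. g (snd p) * indicator (Bcell y) p) / P (indicator (Bcell y))))"

end

theory Submission
  imports Defs
begin

text \<open>If \<open>\<Pi>\<^sub>y(H) > \<beta>\<close>, then also the generalized Bayes posterior of \<open>H\<close> exceeds \<open>\<beta>\<close>.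
  This forces the cell \<open>B\<^sub>y\<close> to have positive lower probability, and, since some linear
  prevision of the credal set attains the lower prevision of the gamble
  \<open>1\<^sub>B\<^sub>y (1\<^sub>H - \<beta>)\<close> (a Hahn--Banach argument), it forces this restriction of
  \<open>f\<^sup>H\<^sup>,\<^sup>\<beta>\<close> to have positive lower prevision. On every other cell \<open>f\<^sup>H\<^sup>,\<^sup>\<beta>\<close>
  vanishes. Only countably many cells can have positive lower probability, so
  \<open>\<B>\<close>-conglomerability applies to their union and yields the claim.\<close>

lemma gamble_add: "gamble f \<Longrightarrow> gamble g \<Longrightarrow> gamble (\<lambda>x. f x + g x)"
  unfolding gamble_def by (metis abs_triangle_ineq add_mono order_trans)

lemma gamble_scale: "gamble f \<Longrightarrow> gamble (\<lambda>x. c * f x)"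
  unfolding gamble_def by (metis abs_mult abs_ge_zero mult_left_mono)

lemma gamble_neg: "gamble f \<Longrightarrow> gamble (\<lambda>x. - f x)"
  unfolding gamble_def by simp

lemma gamble_diff: "gamble f \<Longrightarrow> gamble g \<Longrightarrow> gamble (\<lambda>x. f x - g x)"
  using gamble_add[OF _ gamble_neg] by simp

lemma gamble_mult: "gamble f \<Longrightarrow> gamble g \<Longrightarrow> gamble (\<lambda>x. f x * g x)"
  unfolding gamble_def
proof (elim exE)
  fix A B assume A: "\<forall>x. \<bar>f x\<bar> \<le> A" and B: "\<forall>x. \<bar>g x\<bar> \<le> B"
  show "\<exists>C. \<forall>x. \<bar>f x * g x\<bar> \<le> C"
    by (rule exI[of _ "A * B"]) (simp add: A B abs_mult mult_mono')
qed

lemma gamble_comp: "gamble g \<Longrightarrow> gamble (\<lambda>x. g (h x))"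
  unfolding gamble_def by blast

lemma gamble_const: "gamble (\<lambda>x. c)"
  unfolding gamble_def by auto

lemma gamble_indicator: "gamble (indicator A)"
  unfolding gamble_def by (rule exI[of _ 1]) (simp add: indicator_def)

lemma gamble_sum: "finite F \<Longrightarrow> (\<And>y. y \<in> F \<Longrightarrow> gamble (h y)) \<Longrightarrow> gamble (\<lambda>x. \<Sum>y\<in>F. h y x)"
  by (induction F rule: finite_induct) (simp_all add: gamble_const gamble_add)

lemma gamble_bdd_below: "gamble f \<Longrightarrow> bdd_below (range f)"
  unfolding gamble_def bdd_below_def by (metis abs_le_D2 minus_le_iff rangeE)

section \<open>Sublinear functionals and the Hahn--Banach theorem\<close>

definition le_on_gambles :: "(('a \<Rightarrow> real) \<Rightarrow> real) \<Rightarrow> (('a \<Rightarrow> real) \<Rightarrow> real) \<Rightarrow> bool" where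
  "le_on_gambles r s \<longleftrightarrow> (\<forall>f. gamble f \<longrightarrow> r f \<le> s f)"

definition sublinear :: "(('a \<Rightarrow> real) \<Rightarrow> real) \<Rightarrow> bool" where
  "sublinear q \<longleftrightarrow>
     (\<forall>f g. gamble f \<longrightarrow> gamble g \<longrightarrow> q (\<lambda>x. f x + g x) \<le> q f + q g) \<and>
     (\<forall>c f. 0 < c \<longrightarrow> gamble f \<longrightarrow> q (\<lambda>x. c * f x) = c * q f)"

definition linear_on_gambles :: "(('a \<Rightarrow> real) \<Rightarrow> real) \<Rightarrow> bool" where
  "linear_on_gambles P \<longleftrightarrow>
     (\<forall>f g. gamble f \<longrightarrow> gamble g \<longrightarrow> P (\<lambda>x. f x + g x) = P f + P g) \<and>
     (\<forall>c f. gamble f \<longrightarrow> P (\<lambda>x. c * f x) = c * P f)"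

lemma le_on_gamblesD: "le_on_gambles r s \<Longrightarrow> gamble f \<Longrightarrow> r f \<le> s f"
  unfolding le_on_gambles_def by blast

lemma le_on_gambles_refl: "le_on_gambles r r"
  unfolding le_on_gambles_def by blast

lemma le_on_gambles_trans: "le_on_gambles r s \<Longrightarrow> le_on_gambles s t \<Longrightarrow> le_on_gambles r t"
  unfolding le_on_gambles_def by (blast intro: order_trans)

lemma sublinear_add: "sublinear q \<Longrightarrow> gamble f \<Longrightarrow> gamble g \<Longrightarrow> q (\<lambda>x. f x + g x) \<le> q f + q g"
  unfolding sublinear_def by blast

lemma sublinear_pos_hom: "sublinear q \<Longrightarrow> 0 < c \<Longrightarrow> gamble f \<Longrightarrow> q (\<lambda>x. c * f x) = c * q f"
  unfolding sublinear_def by blast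

lemma sublinear_zero: "sublinear q \<Longrightarrow> q (\<lambda>x. 0) = 0"
  using sublinear_pos_hom[of q 2 "\<lambda>x. 0"] gamble_const[of 0] by simp

lemma sublinear_nonneg_hom: "sublinear q \<Longrightarrow> 0 \<le> c \<Longrightarrow> gamble f \<Longrightarrow> q (\<lambda>x. c * f x) = c * q f"
  by (cases "c = 0") (auto simp: sublinear_zero sublinear_pos_hom)

lemma sublinear_neg_le: "sublinear q \<Longrightarrow> gamble f \<Longrightarrow> - q (\<lambda>x. - f x) \<le> q f"
  using sublinear_add[of q f "\<lambda>x. - f x"] gamble_neg[of f] sublinear_zero[of q] by simp

lemma linear_on_gambles_add:
  "linear_on_gambles P \<Longrightarrow> gamble f \<Longrightarrow> gamble g \<Longrightarrow> P (\<lambda>x. f x + g x) = P f + P g"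
  unfolding linear_on_gambles_def by blast

lemma linear_on_gambles_scale:
  "linear_on_gambles P \<Longrightarrow> gamble f \<Longrightarrow> P (\<lambda>x. c * f x) = c * P f"
  unfolding linear_on_gambles_def by blast

lemma linear_on_gambles_neg:
  "linear_on_gambles P \<Longrightarrow> gamble f \<Longrightarrow> P (\<lambda>x. - f x) = - P f"
  using linear_on_gambles_scale[of P f "- 1"] by simp

text \<open>For a minimal sublinear \<open>q\<close> the tilt agrees with \<open>q\<close> on gambles; at \<open>t = 1\<close> this
  gives \<open>q f + q z \<le> q (f + z)\<close>, so minimal sublinear functionals are linear.\<close>
definition sublinear_tilt ::
    "(('a \<Rightarrow> real) \<Rightarrow> real) \<Rightarrow> ('a \<Rightarrow> real) \<Rightarrow> ('a \<Rightarrow> real) \<Rightarrow> real" where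
  "sublinear_tilt q z f = (INF t\<in>{0..}. q (\<lambda>x. f x + t * z x) - t * q z)"

lemma sublinear_tilt_le:
  assumes q: "sublinear q" and z: "gamble z" and f: "gamble f" and t: "0 \<le> t"
  shows "sublinear_tilt q z f \<le> q (\<lambda>x. f x + t * z x) - t * q z"
proof -
  have "- q (\<lambda>x. - f x) \<le> q (\<lambda>x. f x + s * z x) - s * q z" if "0 \<le> s" for s
  proof -
    have "q (\<lambda>x. (f x + s * z x) + - f x) \<le> q (\<lambda>x. f x + s * z x) + q (\<lambda>x. - f x)"
      by (intro sublinear_add q gamble_add f gamble_scale z gamble_neg)
    then show ?thesis using sublinear_nonneg_hom[OF q that z] by simp
  qed
  then have "bdd_below ((\<lambda>s. q (\<lambda>x. f x + s * z x) - s * q z) ` {0..})"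
    unfolding bdd_below_def by auto
  then show ?thesis unfolding sublinear_tilt_def using t by (auto intro: cINF_lower)
qed

lemma sublinear_tilt_greatest:
  "(\<And>t. 0 \<le> t \<Longrightarrow> c \<le> q (\<lambda>x. f x + t * z x) - t * q z) \<Longrightarrow> c \<le> sublinear_tilt q z f"
  unfolding sublinear_tilt_def by (auto intro: cINF_greatest)

lemma sublinear_tilt_below:
  "sublinear q \<Longrightarrow> gamble z \<Longrightarrow> le_on_gambles (sublinear_tilt q z) q"
  unfolding le_on_gambles_def using sublinear_tilt_le[of q z _ 0] by simp

lemma sublinear_tilt_neg:
  "sublinear q \<Longrightarrow> gamble z \<Longrightarrow> sublinear_tilt q z (\<lambda>x. - z x) \<le> - q z"
  using sublinear_tilt_le[of q z "\<lambda>x. - z x" 1] sublinear_zero[of q] by (simp add: gamble_neg)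

lemma sublinear_sublinear_tilt:
  assumes q: "sublinear q" and z: "gamble z"
  shows "sublinear (sublinear_tilt q z)"
  unfolding sublinear_def
proof (intro conjI allI impI)
  fix f g :: "'a \<Rightarrow> real" assume f: "gamble f" and g: "gamble g"
  define \<phi> where "\<phi> h t = q (\<lambda>x. h x + t * z x) - t * q z" for h :: "'a \<Rightarrow> real" and t
  have split: "sublinear_tilt q z (\<lambda>x. f x + g x) \<le> \<phi> f s + \<phi> g t" if "0 \<le> s" "0 \<le> t" for s t
  proof -
    have "sublinear_tilt q z (\<lambda>x. f x + g x) \<le> \<phi> (\<lambda>x. f x + g x) (s + t)"
      unfolding \<phi>_def using sublinear_tilt_le[OF q z gamble_add[OF f g]] that by simp
    also have "(\<lambda>x. (f x + g x) + (s + t) * z x) = (\<lambda>x. (f x + s * z x) + (g x + t * z x))"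
      by (auto simp: algebra_simps)
    then have "\<phi> (\<lambda>x. f x + g x) (s + t) \<le> \<phi> f s + \<phi> g t"
      unfolding \<phi>_def using sublinear_add[OF q gamble_add[OF f gamble_scale[OF z]] gamble_add[OF g gamble_scale[OF z]]]
      by (simp add: algebra_simps)
    finally show ?thesis .
  qed
  have "sublinear_tilt q z (\<lambda>x. f x + g x) - \<phi> g t \<le> sublinear_tilt q z f" if t: "0 \<le> t" for t
  proof (rule sublinear_tilt_greatest)
    fix s :: real assume "0 \<le> s"
    then show "sublinear_tilt q z (\<lambda>x. f x + g x) - \<phi> g t \<le> q (\<lambda>x. f x + s * z x) - s * q z"
      using split[of s t] t unfolding \<phi>_def by linarith
  qed
  then have "sublinear_tilt q z (\<lambda>x. f x + g x) - sublinear_tilt q z f \<le> sublinear_tilt q z g"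
    unfolding \<phi>_def by (intro sublinear_tilt_greatest) (simp add: algebra_simps)
  then show "sublinear_tilt q z (\<lambda>x. f x + g x) \<le> sublinear_tilt q z f + sublinear_tilt q z g"
    by simp
next
  fix c :: real and f :: "'a \<Rightarrow> real" assume c: "0 < c" and f: "gamble f"
  have scaled: "q (\<lambda>x. c * f x + (c * t) * z x) - (c * t) * q z = c * (q (\<lambda>x. f x + t * z x) - t * q z)"
    for t
  proof -
    have "(\<lambda>x. c * f x + (c * t) * z x) = (\<lambda>x. c * (f x + t * z x))"
      by (auto simp: algebra_simps)
    then show ?thesis
      using sublinear_pos_hom[OF q c gamble_add[OF f gamble_scale[OF z, of t]]]
      by (simp add: right_diff_distrib)
  qed
  have "sublinear_tilt q z (\<lambda>x. c * f x) \<le> c * sublinear_tilt q z f"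
  proof -
    have "sublinear_tilt q z (\<lambda>x. c * f x) / c \<le> sublinear_tilt q z f"
    proof (rule sublinear_tilt_greatest)
      fix t :: real assume "0 \<le> t"
      then have "sublinear_tilt q z (\<lambda>x. c * f x) \<le> c * (q (\<lambda>x. f x + t * z x) - t * q z)"
        using sublinear_tilt_le[OF q z gamble_scale[OF f, of c], of "c * t"] c scaled[of t] by simp
      then show "sublinear_tilt q z (\<lambda>x. c * f x) / c \<le> q (\<lambda>x. f x + t * z x) - t * q z"
        using c by (simp add: field_simps)
    qed
    then show ?thesis using c by (simp add: field_simps)
  qed
  moreover have "c * sublinear_tilt q z f \<le> sublinear_tilt q z (\<lambda>x. c * f x)"
  proof (rule sublinear_tilt_greatest)
    fix t :: real assume "0 \<le> t"
    then have "c * sublinear_tilt q z f \<le> c * (q (\<lambda>x. f x + (t / c) * z x) - (t / c) * q z)"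
      using sublinear_tilt_le[OF q z f, of "t / c"] c by simp
    then show "c * sublinear_tilt q z f \<le> q (\<lambda>x. c * f x + t * z x) - t * q z"
      using scaled[of "t / c"] c by simp
  qed
  ultimately show "sublinear_tilt q z (\<lambda>x. c * f x) = c * sublinear_tilt q z f"
    by simp
qed

lemma minimal_sublinear_linear:
  assumes m: "sublinear m"
    and minimal: "\<And>r. sublinear r \<Longrightarrow> le_on_gambles r m \<Longrightarrow> le_on_gambles m r"
  shows "linear_on_gambles m"
proof -
  have add: "m (\<lambda>x. f x + g x) = m f + m g" if f: "gamble f" and g: "gamble g" for f g
  proof -
    have "le_on_gambles m (sublinear_tilt m g)"
      using minimal sublinear_sublinear_tilt[OF m g] sublinear_tilt_below[OF m g] by blast
    then have "m f \<le> sublinear_tilt m g f"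
      using f by (rule le_on_gamblesD)
    also have "\<dots> \<le> m (\<lambda>x. f x + 1 * g x) - 1 * m g"
      using sublinear_tilt_le[OF m g f, of 1] by simp
    finally show ?thesis using sublinear_add[OF m f g] by simp
  qed
  have neg: "m (\<lambda>x. - f x) = - m f" if f: "gamble f" for f
    using add[OF f gamble_neg[OF f]] sublinear_zero[OF m] by simp
  have hom: "m (\<lambda>x. c * f x) = c * m f" if f: "gamble f" for c f
  proof (cases "0 \<le> c")
    case True
    then show ?thesis using sublinear_nonneg_hom[OF m True f] by simp
  next
    case False
    have "m (\<lambda>x. c * f x) = m (\<lambda>x. - ((- c) * f x))"
      by simp
    also have "\<dots> = - m (\<lambda>x. (- c) * f x)"
      using neg[OF gamble_scale[OF f]] .
    also have "\<dots> = c * m f"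
      using sublinear_pos_hom[OF m _ f, of "- c"] False by simp
    finally show ?thesis .
  qed
  show ?thesis
    unfolding linear_on_gambles_def by (intro conjI allI impI add hom)
qed

lemma bdd_below_dominated_sublinear:
  assumes q: "sublinear q" and C: "\<And>r. r \<in> C \<Longrightarrow> sublinear r \<and> le_on_gambles r q"
    and f: "gamble f"
  shows "bdd_below ((\<lambda>r. r f) ` C)"
proof (rule bdd_belowI2)
  fix r assume "r \<in> C"
  then have "r (\<lambda>x. - f x) \<le> q (\<lambda>x. - f x)"
    using C le_on_gamblesD gamble_neg[OF f] by blast
  then show "- q (\<lambda>x. - f x) \<le> r f"
    using sublinear_neg_le[OF _ f, of r] C[OF \<open>r \<in> C\<close>] by linarith
qed

lemma sublinear_INF_chain:
  assumes q: "sublinear q" and "C \<noteq> {}"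
    and C: "\<And>r. r \<in> C \<Longrightarrow> sublinear r \<and> le_on_gambles r q"
    and chain: "\<And>r s. r \<in> C \<Longrightarrow> s \<in> C \<Longrightarrow> le_on_gambles r s \<or> le_on_gambles s r"
  shows "sublinear (\<lambda>f. INF r\<in>C. r f)"
proof -
  define u where "u = (\<lambda>f. INF r\<in>C. r f)"
  have lower: "u f \<le> r f" if "gamble f" "r \<in> C" for f r
    unfolding u_def using that bdd_below_dominated_sublinear[OF q C] by (auto intro: cINF_lower)
  have greatest: "c \<le> u f" if "\<And>r. r \<in> C \<Longrightarrow> c \<le> r f" for f c
    unfolding u_def using that \<open>C \<noteq> {}\<close> by (auto intro: cINF_greatest)
  have add: "u (\<lambda>x. f x + g x) \<le> u f + u g" if f: "gamble f" and g: "gamble g" for f g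
  proof -
    have "u (\<lambda>x. f x + g x) \<le> r f + s g" if r: "r \<in> C" and s: "s \<in> C" for r s
    proof -
      obtain t where t: "t \<in> C" "t f \<le> r f" "t g \<le> s g"
      proof (cases "le_on_gambles r s")
        case True
        then show ?thesis using that[OF r] le_on_gamblesD[OF True g] by simp
      next
        case False
        then have "le_on_gambles s r" using chain[OF r s] by blast
        then show ?thesis using that[OF s] le_on_gamblesD[OF _ f] by simp
      qed
      have "u (\<lambda>x. f x + g x) \<le> t (\<lambda>x. f x + g x)"
        using lower[OF gamble_add[OF f g] t(1)] .
      also have "\<dots> \<le> t f + t g"
        using sublinear_add[OF _ f g] C[OF t(1)] by blast
      finally show ?thesis using t by linarith
    qed
    then have "u (\<lambda>x. f x + g x) - s g \<le> u f" if "s \<in> C" for s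
      using that by (intro greatest) (simp add: algebra_simps)
    then have "u (\<lambda>x. f x + g x) - u f \<le> u g"
      by (intro greatest) (simp add: algebra_simps)
    then show ?thesis by simp
  qed
  have hom: "u (\<lambda>x. c * f x) = c * u f" if c: "0 < c" and f: "gamble f" for c f
  proof -
    have "u (\<lambda>x. c * f x) / c \<le> u f"
    proof (rule greatest)
      fix r assume r: "r \<in> C"
      have "u (\<lambda>x. c * f x) \<le> r (\<lambda>x. c * f x)"
        using lower[OF gamble_scale[OF f] r] .
      also have "\<dots> = c * r f"
        using sublinear_pos_hom[OF _ c f] C[OF r] by blast
      finally show "u (\<lambda>x. c * f x) / c \<le> r f" using c by (simp add: field_simps)
    qed
    moreover have "c * u f \<le> u (\<lambda>x. c * f x)"
    proof (rule greatest)
      fix r assume r: "r \<in> C"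
      have "c * u f \<le> c * r f"
        using lower[OF f r] c by simp
      also have "\<dots> = r (\<lambda>x. c * f x)"
        using sublinear_pos_hom[OF _ c f] C[OF r] by simp
      finally show "c * u f \<le> r (\<lambda>x. c * f x)" .
    qed
    ultimately show ?thesis using c by (simp add: field_simps)
  qed
  have "sublinear u"
    unfolding sublinear_def using add hom by blast
  then show ?thesis by (simp add: u_def)
qed

text \<open>\<open>le_on_gambles\<close> is only a preorder, so Hausdorff's maximal principle is used instead
  of Zorn's lemma: the infimum of a maximal chain belongs to the chain and is minimal.\<close>
lemma exists_minimal_sublinear_below:
  assumes q: "sublinear q"
  obtains m where "sublinear m" "le_on_gambles m q"
    "\<And>r. sublinear r \<Longrightarrow> le_on_gambles r m \<Longrightarrow> le_on_gambles m r"
proof -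
  define A where "A = {r. sublinear r \<and> le_on_gambles r q}"
  interpret Z: pred_on A "\<lambda>r s. le_on_gambles s r" .
  obtain C where C: "Z.maxchain C"
    using Z.Hausdorff by blast
  have chainC: "Z.chain C"
    using C by (rule Z.maxchain_imp_chain)
  then have CA: "C \<subseteq> A"
    unfolding Z.chain_def by blast
  have chain: "le_on_gambles r s \<or> le_on_gambles s r" if "r \<in> C" "s \<in> C" for r s
    using chainC that le_on_gambles_refl unfolding Z.chain_def by blast
  have qA: "q \<in> A"
    unfolding A_def le_on_gambles_def using q by simp
  have "C \<noteq> {}"
  proof
    assume "C = {}"
    then have "Z.chain {q} \<and> C \<subset> {q}"
      using qA unfolding Z.chain_def by auto
    then show False using C unfolding Z.maxchain_def by blast
  qed
  define u where "u = (\<lambda>f. INF r\<in>C. r f)"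
  have dominated_C: "\<And>r. r \<in> C \<Longrightarrow> sublinear r \<and> le_on_gambles r q"
    using CA unfolding A_def by blast
  have u: "sublinear u"
    unfolding u_def by (rule sublinear_INF_chain[OF q \<open>C \<noteq> {}\<close> dominated_C chain])
  have u_lower: "le_on_gambles u r" if "r \<in> C" for r
    unfolding le_on_gambles_def u_def
    using that bdd_below_dominated_sublinear[OF q dominated_C] by (auto intro: cINF_lower)
  have uA: "u \<in> A"
  proof -
    obtain r where "r \<in> C" using \<open>C \<noteq> {}\<close> by blast
    then show ?thesis
      unfolding A_def using u u_lower dominated_C le_on_gambles_trans by blast
  qed
  have in_C: "r \<in> C" if "r \<in> A" and "le_on_gambles r u" for r
  proof (rule ccontr)
    assume "r \<notin> C"
    have "Z.chain ({r} \<union> C)"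
      using Z.chain_extend[OF chainC \<open>r \<in> A\<close>]
        le_on_gambles_trans[OF \<open>le_on_gambles r u\<close> u_lower] by blast
    moreover have "C \<subset> {r} \<union> C" using \<open>r \<notin> C\<close> by blast
    ultimately show False using C unfolding Z.maxchain_def by blast
  qed
  show ?thesis
  proof
    show "sublinear u" by (rule u)
    show "le_on_gambles u q" using uA unfolding A_def by blast
    fix r assume "sublinear r" and "le_on_gambles r u"
    then have "r \<in> A"
      using uA le_on_gambles_trans unfolding A_def by blast
    then show "le_on_gambles u r"
      using u_lower in_C \<open>le_on_gambles r u\<close> by blast
  qed
qed

theorem Hahn_Banach_support:
  assumes q: "sublinear q" and z: "gamble z"
  obtains P where "linear_on_gambles P" "le_on_gambles P q" "P z = q z"
proof -
  obtain m where m: "sublinear m" and below: "le_on_gambles m (sublinear_tilt q z)"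
    and minimal: "\<And>r. sublinear r \<Longrightarrow> le_on_gambles r m \<Longrightarrow> le_on_gambles m r"
    using exists_minimal_sublinear_below[OF sublinear_sublinear_tilt[OF q z]] by blast
  have lin: "linear_on_gambles m"
    using minimal_sublinear_linear[OF m minimal] .
  have mq: "le_on_gambles m q"
    using le_on_gambles_trans[OF below sublinear_tilt_below[OF q z]] .
  have "- m z = m (\<lambda>x. - z x)"
    using linear_on_gambles_neg[OF lin z] by simp
  also have "\<dots> \<le> sublinear_tilt q z (\<lambda>x. - z x)"
    using le_on_gamblesD[OF below gamble_neg[OF z]] .
  also have "\<dots> \<le> - q z"
    using sublinear_tilt_neg[OF q z] .
  finally have "m z = q z"
    using le_on_gamblesD[OF mq z] by simp
  with lin mq show ?thesis using that by blast
qed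

section \<open>Coherent lower previsions\<close>

lemma coherent_lpD:
  fixes K m :: nat
  assumes "coherent_lp LP" and "\<And>k. k \<le> K \<Longrightarrow> gamble (fs k)"
  shows "0 \<le> (SUP \<omega>. (\<Sum>k=1..K. fs k \<omega> - LP (fs k)) - real m * (fs 0 \<omega> - LP (fs 0)))"
  using assms(1)[unfolded coherent_lp_def, rule_format, of K fs m] assms(2) by blast

lemma coherent_lp_ge_const:
  assumes LP: "coherent_lp LP" and f: "gamble f" and c: "\<And>x. c \<le> f x"
  shows "c \<le> LP f"
proof -
  have "0 \<le> (SUP \<omega>. (\<Sum>k::nat=1..0. f \<omega> - LP f) - real 1 * (f \<omega> - LP f))"
    using coherent_lpD[OF LP, of 0 "\<lambda>k. f" 1] f by simp
  also have "\<dots> \<le> LP f - c"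
    by (rule cSUP_least) (use c in auto)
  finally show ?thesis by simp
qed

lemma coherent_lp_le_const:
  assumes LP: "coherent_lp LP" and f: "gamble f" and c: "\<And>x. f x \<le> c"
  shows "LP f \<le> c"
proof -
  have "0 \<le> (SUP \<omega>. (\<Sum>k::nat=1..1. f \<omega> - LP f) - real 0 * (f \<omega> - LP f))"
    using coherent_lpD[OF LP, of 1 "\<lambda>k. f" 0] f by simp
  also have "\<dots> \<le> c - LP f"
    by (rule cSUP_least) (use c in auto)
  finally show ?thesis by simp
qed

lemma coherent_lp_ge_INF:
  assumes LP: "coherent_lp LP" and f: "gamble f"
  shows "(INF x. f x) \<le> LP f"
  by (rule coherent_lp_ge_const[OF LP f]) (simp add: cINF_lower gamble_bdd_below[OF f])

lemma coherent_lp_superadd: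
  assumes LP: "coherent_lp LP" and f: "gamble f" and g: "gamble g"
  shows "LP f + LP g \<le> LP (\<lambda>x. f x + g x)"
proof -
  define fs where "fs k = (if k = 0 then (\<lambda>x. f x + g x) else if k = 1 then f else g)" for k :: nat
  have "0 \<le> (SUP \<omega>. (\<Sum>k=1..2. fs k \<omega> - LP (fs k)) - real 1 * (fs 0 \<omega> - LP (fs 0)))"
    by (rule coherent_lpD[OF LP]) (simp add: fs_def f g gamble_add)
  also have "(\<lambda>\<omega>. (\<Sum>k=1..2. fs k \<omega> - LP (fs k)) - real 1 * (fs 0 \<omega> - LP (fs 0))) =
             (\<lambda>\<omega>. LP (\<lambda>x. f x + g x) - LP f - LP g)"
    by (auto simp: fs_def numeral_2_eq_2)
  finally show ?thesis by simp
qed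

lemma coherent_lp_mono:
  assumes LP: "coherent_lp LP" and f: "gamble f" and g: "gamble g" and le: "\<And>x. f x \<le> g x"
  shows "LP f \<le> LP g"
proof -
  have "LP f + LP (\<lambda>x. g x - f x) \<le> LP (\<lambda>x. f x + (g x - f x))"
    by (rule coherent_lp_superadd[OF LP f gamble_diff[OF g f]])
  moreover have "0 \<le> LP (\<lambda>x. g x - f x)"
    by (rule coherent_lp_ge_const[OF LP gamble_diff[OF g f]]) (simp add: le)
  ultimately show ?thesis by simp
qed

lemma coherent_lp_sum:
  assumes LP: "coherent_lp LP" and "finite F" and "\<And>y. y \<in> F \<Longrightarrow> gamble (h y)"
  shows "(\<Sum>y\<in>F. LP (h y)) \<le> LP (\<lambda>x. \<Sum>y\<in>F. h y x)"
  using assms(2,3)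
proof (induction F rule: finite_induct)
  case empty
  then show ?case using coherent_lp_ge_const[OF LP gamble_const, of 0 0] by simp
next
  case (insert a F)
  have "(\<Sum>y\<in>insert a F. LP (h y)) \<le> LP (h a) + LP (\<lambda>x. \<Sum>y\<in>F. h y x)"
    using insert by simp
  also have "\<dots> \<le> LP (\<lambda>x. h a x + (\<Sum>y\<in>F. h y x))"
    using insert by (intro coherent_lp_superadd[OF LP] gamble_sum) auto
  finally show ?case using insert.hyps by simp
qed

lemma coherent_lp_lipschitz:
  assumes LP: "coherent_lp LP" and f: "gamble f" and g: "gamble g" and M: "\<And>x. \<bar>f x - g x\<bar> \<le> M"
  shows "\<bar>LP f - LP g\<bar> \<le> M"
proof -
  have "LP g + LP (\<lambda>x. f x - g x) \<le> LP (\<lambda>x. g x + (f x - g x))"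
    by (rule coherent_lp_superadd[OF LP g gamble_diff[OF f g]])
  moreover have "- M \<le> LP (\<lambda>x. f x - g x)"
    by (rule coherent_lp_ge_const[OF LP gamble_diff[OF f g]]) (use M in \<open>smt (verit)\<close>)
  moreover have "LP f + LP (\<lambda>x. g x - f x) \<le> LP (\<lambda>x. f x + (g x - f x))"
    by (rule coherent_lp_superadd[OF LP f gamble_diff[OF g f]])
  moreover have "- M \<le> LP (\<lambda>x. g x - f x)"
    by (rule coherent_lp_ge_const[OF LP gamble_diff[OF g f]]) (use M in \<open>smt (verit)\<close>)
  ultimately show ?thesis by simp
qed

lemma coherent_lp_scaled_le:
  assumes LP: "coherent_lp LP" and f: "gamble f" and g: "gamble g"
    and eq: "\<And>x. real a * f x = real b * g x"
  shows "real a * LP f \<le> real b * LP g"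
proof -
  define fs where "fs k = (if k = 0 then g else f)" for k :: nat
  have "0 \<le> (SUP \<omega>. (\<Sum>k=1..a. fs k \<omega> - LP (fs k)) - real b * (fs 0 \<omega> - LP (fs 0)))"
    by (rule coherent_lpD[OF LP]) (simp add: fs_def f g)
  also have "(\<lambda>\<omega>. (\<Sum>k=1..a. fs k \<omega> - LP (fs k)) - real b * (fs 0 \<omega> - LP (fs 0))) =
             (\<lambda>\<omega>. real b * LP g - real a * LP f)"
  proof
    fix \<omega>
    have "(\<Sum>k=1..a. fs k \<omega> - LP (fs k)) = real a * (f \<omega> - LP f)"
      by (simp add: fs_def)
    then show "(\<Sum>k=1..a. fs k \<omega> - LP (fs k)) - real b * (fs 0 \<omega> - LP (fs 0)) =
               real b * LP g - real a * LP f"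
      using eq[of \<omega>] by (simp add: fs_def algebra_simps)
  qed
  finally show ?thesis by simp
qed

lemma coherent_lp_rat_hom:
  assumes LP: "coherent_lp LP" and f: "gamble f" and r: "r \<in> \<rat>" "0 < r"
  shows "LP (\<lambda>x. r * f x) = r * LP f"
proof -
  obtain a b :: nat where b: "b \<noteq> 0" and ab: "r = real a / real b"
    using Rats_abs_nat_div_natE[OF r(1)] r(2) by (metis abs_of_pos)
  have rf: "gamble (\<lambda>x. r * f x)" using f by (rule gamble_scale)
  have "real a * LP f \<le> real b * LP (\<lambda>x. r * f x)"
    by (rule coherent_lp_scaled_le[OF LP f rf]) (use b in \<open>simp add: ab\<close>)
  moreover have "real b * LP (\<lambda>x. r * f x) \<le> real a * LP f"
    by (rule coherent_lp_scaled_le[OF LP rf f]) (use b in \<open>simp add: ab\<close>)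
  ultimately show ?thesis using b by (simp add: ab field_simps)
qed

text \<open>Coherence only yields homogeneity for rational factors directly; real factors follow
  because \<open>LP\<close> is 1-Lipschitz for the supremum norm.\<close>
lemma coherent_lp_pos_hom:
  assumes LP: "coherent_lp LP" and f: "gamble f" and c: "0 < c"
  shows "LP (\<lambda>x. c * f x) = c * LP f"
proof -
  obtain B where B: "\<And>x. \<bar>f x\<bar> \<le> B"
    using f unfolding gamble_def by blast
  have "\<bar>LP (\<lambda>x. c * f x) - c * LP f\<bar> \<le> 0 + e" if e: "0 < e" for e
  proof -
    define \<delta> where "\<delta> = e / (\<bar>B\<bar> + \<bar>LP f\<bar> + 1)"
    have \<delta>: "0 < \<delta>" using e by (simp add: \<delta>_def add_nonneg_pos)
    obtain r where r: "r \<in> \<rat>" "c < r" "r < c + \<delta>"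
      using Rats_dense_in_real[of c "c + \<delta>"] \<delta> by auto
    have "\<bar>LP (\<lambda>x. c * f x) - LP (\<lambda>x. r * f x)\<bar> \<le> \<delta> * \<bar>B\<bar>"
    proof (rule coherent_lp_lipschitz[OF LP gamble_scale[OF f] gamble_scale[OF f]])
      fix x
      have "\<bar>c * f x - r * f x\<bar> = \<bar>r - c\<bar> * \<bar>f x\<bar>"
        by (simp add: abs_mult[symmetric] algebra_simps)
      also have "\<dots> \<le> \<delta> * \<bar>B\<bar>"
        using r B[of x] by (intro mult_mono) auto
      finally show "\<bar>c * f x - r * f x\<bar> \<le> \<delta> * \<bar>B\<bar>" .
    qed
    moreover have "LP (\<lambda>x. r * f x) = r * LP f"
      using coherent_lp_rat_hom[OF LP f r(1)] r c by simp
    moreover have "\<bar>r * LP f - c * LP f\<bar> \<le> \<delta> * \<bar>LP f\<bar>"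
    proof -
      have "\<bar>r * LP f - c * LP f\<bar> = \<bar>r - c\<bar> * \<bar>LP f\<bar>"
        by (simp add: abs_mult[symmetric] left_diff_distrib)
      also have "\<dots> \<le> \<delta> * \<bar>LP f\<bar>"
        using r by (intro mult_right_mono) auto
      finally show ?thesis .
    qed
    ultimately have "\<bar>LP (\<lambda>x. c * f x) - c * LP f\<bar> \<le> \<delta> * (\<bar>B\<bar> + \<bar>LP f\<bar>)"
      by (simp add: distrib_left)
    also have "\<dots> \<le> e"
      using e by (simp add: \<delta>_def field_simps)
    finally show ?thesis by simp
  qed
  then have "\<bar>LP (\<lambda>x. c * f x) - c * LP f\<bar> \<le> 0"
    by (rule field_le_epsilon)
  then show ?thesis by simp
qed

lemma sublinear_conjugate:
  assumes LP: "coherent_lp LP"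
  shows "sublinear (\<lambda>f. - LP (\<lambda>x. - f x))"
  unfolding sublinear_def
proof (intro conjI allI impI)
  fix f g :: "'a \<Rightarrow> real" assume f: "gamble f" and g: "gamble g"
  have "LP (\<lambda>x. - f x) + LP (\<lambda>x. - g x) \<le> LP (\<lambda>x. - f x + - g x)"
    by (rule coherent_lp_superadd[OF LP gamble_neg[OF f] gamble_neg[OF g]])
  then show "- LP (\<lambda>x. - (f x + g x)) \<le> - LP (\<lambda>x. - f x) + - LP (\<lambda>x. - g x)"
    by simp
next
  fix c :: real and f :: "'a \<Rightarrow> real" assume "0 < c" "gamble f"
  then show "- LP (\<lambda>x. - (c * f x)) = c * - LP (\<lambda>x. - f x)"
    using coherent_lp_pos_hom[OF LP gamble_neg] by simp
qed

lemma linear_prevision_iff: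
  "linear_prevision P \<longleftrightarrow> linear_on_gambles P \<and> (\<forall>f. gamble f \<longrightarrow> (INF x. f x) \<le> P f)"
  unfolding linear_prevision_def linear_on_gambles_def by blast

lemma credalD:
  assumes "P \<in> credal LP"
  shows "linear_on_gambles P" and "\<And>f. gamble f \<Longrightarrow> LP f \<le> P f"
    and "\<And>f. gamble f \<Longrightarrow> (INF x. f x) \<le> P f"
  using assms unfolding credal_def linear_prevision_iff by auto

theorem coherent_lp_lower_envelope:
  assumes LP: "coherent_lp LP" and h: "gamble h"
  obtains P where "P \<in> credal LP" "P h = LP h"
proof -
  obtain P where lin: "linear_on_gambles P" and below: "le_on_gambles P (\<lambda>f. - LP (\<lambda>x. - f x))"
    and attained: "P (\<lambda>x. - h x) = - LP (\<lambda>x. - (- h x))"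
    using Hahn_Banach_support[OF sublinear_conjugate[OF LP] gamble_neg[OF h]] by blast
  have dominates: "LP f \<le> P f" if f: "gamble f" for f
    using le_on_gamblesD[OF below gamble_neg[OF f]] linear_on_gambles_neg[OF lin f] by simp
  have "P \<in> credal LP"
    unfolding credal_def linear_prevision_iff
    using lin dominates order_trans[OF coherent_lp_ge_INF[OF LP] dominates] by blast
  moreover have "P h = LP h"
    using attained linear_on_gambles_neg[OF lin h] by simp
  ultimately show ?thesis by (rule that)
qed

lemma indicator_Bcell: "indicator (Bcell y) p = (if fst p = y then 1 else (0::real))"
  by (cases p) (auto simp: Bcell_def)

text \<open>At most \<open>n + 1\<close> cells have lower probability above \<open>1 / (n + 1)\<close>, since their
  indicators sum to at most \<open>1\<close>.\<close>
lemma countable_positive_cells: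
  fixes LP :: "(('y \<times> 't) \<Rightarrow> real) \<Rightarrow> real"
  assumes LP: "coherent_lp LP"
  shows "countable {y. 0 < LP (indicator (Bcell y))}"
proof -
  define T where "T n = {y. inverse (real (Suc n)) < LP (indicator (Bcell y))}" for n
  have fin: "finite (T n)" for n
  proof -
    have "card G \<le> Suc n" if G: "G \<subseteq> T n" "finite G" for G
    proof -
      have "real (card G) * inverse (real (Suc n)) \<le> (\<Sum>y\<in>G. LP (indicator (Bcell y)))"
        by (rule sum_bounded_below) (use G in \<open>auto simp: T_def\<close>)
      also have "\<dots> \<le> LP (\<lambda>p. \<Sum>y\<in>G. indicator (Bcell y) p)"
        by (rule coherent_lp_sum[OF LP G(2) gamble_indicator])
      also have "\<dots> \<le> 1"
      proof (rule coherent_lp_le_const[OF LP gamble_sum[OF G(2) gamble_indicator]])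
        fix p :: "'y \<times> 't"
        have "(\<Sum>y\<in>G. indicator (Bcell y) p) = (if fst p \<in> G then 1 else (0::real))"
          using G(2) by (simp add: indicator_Bcell)
        then show "(\<Sum>y\<in>G. indicator (Bcell y) p) \<le> (1::real)" by simp
      qed
      finally have "real (card G) \<le> real (Suc n)"
        by (simp add: field_simps)
      then show ?thesis by linarith
    qed
    then show ?thesis using finite_if_finite_subsets_card_bdd[of "T n" "Suc n"] by fast
  qed
  have "{y. 0 < LP (indicator (Bcell y))} \<subseteq> (\<Union>n. T n)"
  proof
    fix y assume "y \<in> {y. 0 < LP (indicator (Bcell y))}"
    then obtain n where "0 < n" "inverse (real n) < LP (indicator (Bcell y))"
      using ex_inverse_of_nat_less by auto
    then have "y \<in> T (n - 1)"
      unfolding T_def by simp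
    then show "y \<in> (\<Union>n. T n)" by blast
  qed
  moreover have "countable (\<Union>n. T n)"
    using fin by (intro countable_UN countableI_type countable_finite)
  ultimately show ?thesis
    by (rule countable_subset)
qed

lemma positive_cell_of_positive_restriction:
  assumes LP: "coherent_lp LP" and f: "gamble f"
    and pos: "0 < LP (\<lambda>p. indicator (Bcell y) p * f p)"
  shows "0 < LP (indicator (Bcell y))"
proof -
  obtain B where B: "\<And>p. \<bar>f p\<bar> \<le> B"
    using f unfolding gamble_def by blast
  define M where "M = \<bar>B\<bar> + 1"
  have M: "0 < M" unfolding M_def by simp
  have "LP (\<lambda>p. indicator (Bcell y) p * f p) \<le> LP (\<lambda>p. M * indicator (Bcell y) p)"
  proof (rule coherent_lp_mono[OF LP gamble_mult[OF gamble_indicator f] gamble_scale[OF gamble_indicator]])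
    fix p
    show "indicator (Bcell y) p * f p \<le> M * indicator (Bcell y) p"
      using B[of p] unfolding M_def by (auto simp: indicator_def)
  qed
  also have "\<dots> = M * LP (indicator (Bcell y))"
    using coherent_lp_pos_hom[OF LP gamble_indicator M] by simp
  finally have "0 < M * LP (indicator (Bcell y))"
    using pos by linarith
  then show ?thesis using M by (simp add: zero_less_mult_iff)
qed

lemma B_conglomerable_nonneg:
  fixes LP :: "(('y \<times> 't) \<Rightarrow> real) \<Rightarrow> real"
  assumes LP: "coherent_lp LP" and cong: "B_conglomerable LP" and f: "gamble f"
    and cells: "\<And>y. 0 < LP (\<lambda>p. indicator (Bcell y) p * f p) \<or> (\<forall>t. f (y, t) = 0)"
  shows "0 \<le> LP f"
proof -
  define S where "S = {y. 0 < LP (\<lambda>p. indicator (Bcell y) p * f p)}"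
  have "S \<subseteq> {y. 0 < LP (indicator (Bcell y))}"
    using positive_cell_of_positive_restriction[OF LP f] unfolding S_def by blast
  then have "countable S"
    using countable_positive_cells[OF LP] by (rule countable_subset)
  then have "0 \<le> LP (\<lambda>p. indicator (\<Union>y\<in>S. Bcell y) p * f p)"
    using cong f unfolding B_conglomerable_def S_def by blast
  moreover have "(\<lambda>p. indicator (\<Union>y\<in>S. Bcell y) p * f p) = f"
  proof
    fix p :: "'y \<times> 't"
    show "indicator (\<Union>y\<in>S. Bcell y) p * f p = f p"
      using cells[of "fst p"] unfolding S_def
      by (cases p) (auto simp: indicator_def Bcell_def)
  qed
  ultimately show ?thesis by simp
qed

section \<open>The generalized Bayes rule\<close>

lemma gen_bayes_le:
  fixes LP :: "(('y \<times> 't) \<Rightarrow> real) \<Rightarrow> real" and g :: "'t \<Rightarrow> real"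
  assumes LP: "coherent_lp LP" and g: "gamble g" and pos: "0 < LP (indicator (Bcell y))"
    and nonpos: "LP (\<lambda>p. (g (snd p) - \<beta>) * indicator (Bcell y) p) \<le> 0"
  shows "gen_bayes LP y g \<le> \<beta>"
proof -
  define B :: "'y \<times> 't \<Rightarrow> real" where "B = indicator (Bcell y)"
  define G where "G p = g (snd p) * B p" for p
  have gB: "gamble B" unfolding B_def by (rule gamble_indicator)
  have gG: "gamble G"
    unfolding G_def by (rule gamble_mult[OF gamble_comp[OF g] gB])
  have PB_pos: "0 < P B" if "P \<in> credal LP" for P
    using credalD(2)[OF that gB] pos unfolding B_def by simp
  obtain P where P: "P \<in> credal LP"
    and attained: "P (\<lambda>p. G p + (- \<beta>) * B p) = LP (\<lambda>p. G p + (- \<beta>) * B p)"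
    using coherent_lp_lower_envelope[OF LP gamble_add[OF gG gamble_scale[OF gB]]] by blast
  have "P G - \<beta> * P B = LP (\<lambda>p. G p + (- \<beta>) * B p)"
    using attained linear_on_gambles_add[OF credalD(1)[OF P] gG gamble_scale[OF gB, of "- \<beta>"]]
      linear_on_gambles_scale[OF credalD(1)[OF P] gB, of "- \<beta>"] by simp
  also have "(\<lambda>p. G p + (- \<beta>) * B p) = (\<lambda>p. (g (snd p) - \<beta>) * indicator (Bcell y) p)"
    by (simp add: fun_eq_iff G_def B_def algebra_simps)
  finally have ratio: "P G / P B \<le> \<beta>"
    using nonpos PB_pos[OF P] by (simp add: field_simps)
  obtain M where M: "\<And>t. \<bar>g t\<bar> \<le> M"
    using g unfolding gamble_def by blast
  have "- M \<le> Q G / Q B" if Q: "Q \<in> credal LP" for Q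
  proof -
    have "0 \<le> G p + M * B p" for p
      using M[of "snd p"] by (auto simp: G_def B_def indicator_def)
    then have "0 \<le> (INF p. G p + M * B p)"
      by (intro cINF_greatest) auto
    also have "\<dots> \<le> Q (\<lambda>p. G p + M * B p)"
      using credalD(3)[OF Q gamble_add[OF gG gamble_scale[OF gB]]] .
    also have "\<dots> = Q G + M * Q B"
      using linear_on_gambles_add[OF credalD(1)[OF Q] gG gamble_scale[OF gB, of M]]
        linear_on_gambles_scale[OF credalD(1)[OF Q] gB, of M] by simp
    finally show ?thesis
      using PB_pos[OF Q] by (simp add: field_simps)
  qed
  then have "bdd_below ((\<lambda>Q. Q G / Q B) ` credal LP)"
    by (rule bdd_belowI2)
  then have "(INF Q\<in>credal LP. Q G / Q B) \<le> P G / P B"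
    using P by (rule cINF_lower)
  moreover have "gen_bayes LP y g = (INF Q\<in>credal LP. Q G / Q B)"
    unfolding gen_bayes_def G_def B_def using pos by simp
  ultimately show ?thesis using ratio by simp
qed

lemma gen_bayes_gt_imp_cell_pos:
  fixes LP :: "(('y \<times> 't) \<Rightarrow> real) \<Rightarrow> real"
  assumes LP: "coherent_lp LP" and "H \<noteq> UNIV" and "0 \<le> \<beta>"
    and gt: "\<beta> < gen_bayes LP y (indicator H)"
  shows "0 < LP (\<lambda>p. (indicator H (snd p) - \<beta>) * indicator (Bcell y) p)"
proof -
  have "LP (indicator (Bcell y)) \<noteq> 0"
  proof
    assume "LP (indicator (Bcell y)) = 0"
    obtain \<theta> where "\<theta> \<notin> H" using \<open>H \<noteq> UNIV\<close> by blast
    have "gen_bayes LP y (indicator H) = (INF \<theta>. indicator H \<theta>)"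
      unfolding gen_bayes_def using \<open>LP (indicator (Bcell y)) = 0\<close> by simp
    also have "\<dots> \<le> indicator H \<theta>"
      by (rule cINF_lower[OF gamble_bdd_below[OF gamble_indicator]]) simp
    finally show False using gt \<open>0 \<le> \<beta>\<close> \<open>\<theta> \<notin> H\<close> by simp
  qed
  moreover have "0 \<le> LP (indicator (Bcell y))"
    by (rule coherent_lp_ge_const[OF LP gamble_indicator]) simp
  ultimately have "0 < LP (indicator (Bcell y))" by simp
  then show ?thesis
    using gen_bayes_le[OF LP gamble_indicator, of y H \<beta>] gt by linarith
qed

definition invulnerability_gamble ::
    "('y \<Rightarrow> ('t \<Rightarrow> real) \<Rightarrow> real) \<Rightarrow> 't set \<Rightarrow> real \<Rightarrow> 'y \<times> 't \<Rightarrow> real" where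
  "invulnerability_gamble IM H \<beta> =
     (\<lambda>(y, \<theta>). (indicator H \<theta> - \<beta>) * (if IM y (indicator H) > \<beta> then 1 else 0))"

lemma gamble_invulnerability_gamble:
  "0 \<le> \<beta> \<Longrightarrow> \<beta> \<le> 1 \<Longrightarrow> gamble (invulnerability_gamble IM H \<beta>)"
  unfolding gamble_def invulnerability_gamble_def by (intro exI[of _ 1]) (auto simp: indicator_def)

lemma invulnerability_gamble_cell:
  fixes LP :: "(('y \<times> 't) \<Rightarrow> real) \<Rightarrow> real"
  assumes LP: "coherent_lp LP" and "H \<noteq> UNIV" and "0 \<le> \<beta>"
    and dominated: "IM y (indicator H) \<le> gen_bayes LP y (indicator H)"
  defines "f \<equiv> invulnerability_gamble IM H \<beta>"
  shows "0 < LP (\<lambda>p. indicator (Bcell y) p * f p) \<or> (\<forall>\<theta>. f (y, \<theta>) = 0)"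
proof (cases "\<beta> < IM y (indicator H)")
  case True
  have "0 < LP (\<lambda>p. (indicator H (snd p) - \<beta>) * indicator (Bcell y) p)"
    using True dominated by (intro gen_bayes_gt_imp_cell_pos[OF LP \<open>H \<noteq> UNIV\<close> \<open>0 \<le> \<beta>\<close>]) simp
  moreover have "(\<lambda>p. indicator (Bcell y) p * f p) =
                 (\<lambda>p. (indicator H (snd p) - \<beta>) * indicator (Bcell y) p)"
  proof
    fix p :: "'y \<times> 't"
    show "indicator (Bcell y) p * f p = (indicator H (snd p) - \<beta>) * indicator (Bcell y) p"
      using True by (cases p) (simp add: f_def invulnerability_gamble_def indicator_Bcell)
  qed
  ultimately show ?thesis by simp
next
  case False
  then show ?thesis by (simp add: f_def invulnerability_gamble_def)
qed

theorem proposition1: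
  fixes LP :: "(('y \<times> 't) \<Rightarrow> real) \<Rightarrow> real"
    and Pi :: "'y \<Rightarrow> ('t \<Rightarrow> real) \<Rightarrow> real"
  assumes "coherent_lp LP"
    and "B_conglomerable LP"
    and "\<forall>y. coherent_lp (Pi y)"
    and "\<forall>y g. gamble g \<longrightarrow> Pi y g \<le> gen_bayes LP y g"
  shows "\<forall>(H::'t set) (\<beta>::real). 0 \<le> \<beta> \<and> \<beta> \<le> 1 \<longrightarrow>
           0 \<le> LP (\<lambda>(y, \<theta>). (indicator H \<theta> - \<beta>) *
                              (if Pi y (indicator H) > \<beta> then 1 else 0))"
proof (intro allI impI)
  fix H :: "'t set" and \<beta> :: real
  assume \<beta>: "0 \<le> \<beta> \<and> \<beta> \<le> 1"
  have f: "gamble (invulnerability_gamble Pi H \<beta>)"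
    using \<beta> by (simp add: gamble_invulnerability_gamble)
  have "0 \<le> LP (invulnerability_gamble Pi H \<beta>)"
  proof (cases "H = UNIV")
    case True
    then show ?thesis
      using \<beta> by (intro coherent_lp_ge_const[OF assms(1) f]) (auto simp: invulnerability_gamble_def)
  next
    case False
    then show ?thesis
      using invulnerability_gamble_cell[OF assms(1) False] assms(4) gamble_indicator \<beta>
      by (intro B_conglomerable_nonneg[OF assms(1,2) f]) blast
  qed
  then show "0 \<le> LP (\<lambda>(y, \<theta>). (indicator H \<theta> - \<beta>) *
                              (if Pi y (indicator H) > \<beta> then 1 else 0))"
    unfolding invulnerability_gamble_def .
qed

end
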